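(* Let $R$ be a commutative ring with unit and $M$ an $R$-module. Let $a_1,\dots,a_l\in R$, let $b\in M$ be nonzero, and put $a=\sum_{i=1}^l a_i$. The following are equivalent: (1) the equation $\sum_{i=1}^l a_i m_i=b$ is partition regular over $M$; (2) this equation has a constant solution in $M$, i.e. there is $m\in M$ with $\sum_{i=1}^l a_i m=b$; (3) $b\in aM$.
   Context: For a $k\times l$ matrix $\mathbf{A}$ over $R$ and $\mathbf b\in M^k$, the equation $\mathbf{A}\mathbf{m}=\mathbf b$ is partition regular over $M$ if for every $r\ge1$ and every map $\chi\colon M\to\{1,\dots,r\}$ there exists $\mathbf m=(m_1,\dots,m_l)^{\intercal}\in M^l$, not all $m_i$ zero, with $\mathbf{A}\mathbf{m}=\mathbf b$ and $\chi(m_1)=\dots=\chi(m_l)$. Here $k=1$ and $\mathbf A=(a_1,\dots,a_l)$. *)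

theory Defs
  imports "HOL-Analysis.Analysis"
begin

definition partition_regular ::
  "('r::comm_ring_1 \<Rightarrow> 'm::ab_group_add \<Rightarrow> 'm) \<Rightarrow> nat \<Rightarrow> (nat \<Rightarrow> 'r) \<Rightarrow> 'm \<Rightarrow> bool" where
  "partition_regular sc l a b \<longleftrightarrow>
     (\<forall>r::nat. r \<ge> 1 \<longrightarrow> (\<forall>col::'m \<Rightarrow> nat. range col \<subseteq> {1..r} \<longrightarrow>
        (\<exists>m::nat \<Rightarrow> 'm. (\<exists>i\<in>{1..l}. m i \<noteq> 0)
            \<and> (\<Sum>i=1..l. sc (a i) (m i)) = b
            \<and> (\<forall>i\<in>{1..l}. \<forall>j\<in>{1..l}. col (m i) = col (m j)))))"

end

theory Submission
  imports Defs
begin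

text \<open>If \<open>b = a m\<close>, the constant tuple \<open>(m, ..., m)\<close> is a monochromatic solution for every
  colouring, and \<open>m \<noteq> 0\<close> because \<open>b \<noteq> 0\<close>. Conversely, if \<open>b \<notin> aM\<close>, divisibility of the circle
  group and Zorn's lemma give a character \<open>\<phi>\<close> of \<open>M\<close> into the unit circle that is trivial on
  \<open>aM\<close> with \<open>\<phi> b \<noteq> 1\<close>. Colour \<open>m\<close> by approximate values of \<open>\<phi> (a\<^sub>i m)\<close>, \<open>i = 1..l\<close>. For a
  monochromatic solution, \<open>\<phi> b = \<Prod>\<^sub>i \<phi> (a\<^sub>i m\<^sub>i)\<close> is then close to
  \<open>\<Prod>\<^sub>i \<phi> (a\<^sub>i m\<^sub>1) = \<phi> (a m\<^sub>1) = 1\<close>, which fails once the approximation is finer than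
  \<open>|\<phi> b - 1| / l\<close>.\<close>

lemma int_subgroup_eq_multiples:
  fixes I :: "int set"
  assumes "0 \<in> I" and diff: "\<And>i j. i \<in> I \<Longrightarrow> j \<in> I \<Longrightarrow> i - j \<in> I"
  obtains k :: nat where "I = {j. int k dvd j}"
proof -
  have uminus: "- i \<in> I" if "i \<in> I" for i
    using diff[OF assms(1) that] by simp
  have add: "i + j \<in> I" if "i \<in> I" "j \<in> I" for i j
    using diff[OF that(1) uminus[OF that(2)]] by simp
  have mult: "q * i \<in> I" if "i \<in> I" for q i
  proof (induction q rule: int_induct[where k = 0])
    case (step1 q)
    then show ?case using add[OF step1(2) that] by (simp add: distrib_right)
  next
    case (step2 q)
    then show ?case using diff[OF step2(2) that] by (simp add: left_diff_distrib)
  qed (simp add: assms(1))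
  show ?thesis
  proof (cases "I \<subseteq> {0}")
    case True
    then show ?thesis
      using assms(1) by (intro that[of 0]) auto
  next
    case False
    then obtain i where "i \<in> I" "i \<noteq> 0" by blast
    then have ex: "0 < nat \<bar>i\<bar> \<and> int (nat \<bar>i\<bar>) \<in> I"
      using uminus by (cases "i \<ge> 0") auto
    define k where "k = (LEAST n. 0 < n \<and> int n \<in> I)"
    have k: "0 < k" "int k \<in> I"
      using LeastI[of "\<lambda>n. 0 < n \<and> int n \<in> I", OF ex] unfolding k_def by blast+
    have least: "k \<le> n" if "0 < n" "int n \<in> I" for n
      unfolding k_def using that by (blast intro: Least_le)
    have "int k dvd j" if "j \<in> I" for j
    proof -
      define r where "r = j mod int k"
      have "r = j - (j div int k) * int k"
        unfolding r_def by (simp add: minus_div_mult_eq_mod)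
      then have "r \<in> I"
        using diff[OF that mult[OF k(2)]] by simp
      moreover have "0 \<le> r" "r < int k"
        unfolding r_def using k(1) by simp_all
      ultimately have "r = 0"
        using least[of "nat r"] by fastforce
      then show ?thesis
        unfolding r_def by (simp add: dvd_eq_mod_eq_0)
    qed
    moreover have "j \<in> I" if "int k dvd j" for j
      using that mult[OF k(2)] by (auto elim!: dvdE simp: mult.commute)
    ultimately show ?thesis
      by (intro that[of k]) blast
  qed
qed

lemma unit_circle_root:
  fixes c :: complex
  assumes "0 < k" "norm c = 1"
  obtains w where "w ^ k = c" "norm w = 1" "2 \<le> k \<Longrightarrow> w \<noteq> 1"
proof -
  have "c \<noteq> 0"
    using assms(2) by auto
  then have "card {w. w ^ k = c} = k"
    using bij_betw_same_card[OF bij_betw_nth_root_unity[of c k]] card_roots_unity_eq[OF assms(1)] assms(1)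
    by simp
  obtain w where w: "w ^ k = c" "2 \<le> k \<Longrightarrow> w \<noteq> 1"
  proof (cases "2 \<le> k")
    case True
    then have "card ({w. w ^ k = c} - {1}) > 0"
      using \<open>card {w. w ^ k = c} = k\<close> card_Diff_singleton_if[of "{w. w ^ k = c}" 1] by auto
    then obtain w where "w \<in> {w. w ^ k = c} - {1}"
      by (metis card_gt_0_iff ex_in_conv)
    then show ?thesis using that by blast
  next
    case False
    have "card {w. w ^ k = c} > 0"
      using \<open>card {w. w ^ k = c} = k\<close> assms(1) by simp
    then obtain w where "w \<in> {w. w ^ k = c}"
      by (metis card_gt_0_iff ex_in_conv)
    then show ?thesis using that False by blast
  qed
  moreover have "norm w ^ k = 1 ^ k"
    using w(1) assms(2) by (simp add: norm_power[symmetric])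
  then have "norm w = 1"
    using power_eq_imp_eq_base[of "norm w" k 1] assms(1) by simp
  ultimately show ?thesis using that by blast
qed

lemma compact_finite_approximation:
  fixes \<psi> :: "'a \<Rightarrow> 'b::metric_space"
  assumes "compact S" "\<And>x. \<psi> x \<in> S" "0 < \<epsilon>"
  obtains c where "finite (range c)" "\<And>x. dist (\<psi> x) (c x) < \<epsilon>"
proof -
  obtain K where K: "finite K" "S \<subseteq> (\<Union>y\<in>K. ball y \<epsilon>)"
    using seq_compact_imp_totally_bounded[OF compact_imp_seq_compact[OF assms(1)]] assms(3) by blast
  define c where "c x = (SOME y. y \<in> K \<and> dist y (\<psi> x) < \<epsilon>)" for x
  have "\<exists>y. y \<in> K \<and> dist y (\<psi> x) < \<epsilon>" for x
    using K(2) assms(2)[of x] unfolding subset_eq by (metis UN_iff mem_ball)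
  then have "c x \<in> K \<and> dist (c x) (\<psi> x) < \<epsilon>" for x
    unfolding c_def by (rule someI_ex)
  then have "range c \<subseteq> K" "dist (\<psi> x) (c x) < \<epsilon>" for x
    by (blast, simp add: dist_commute)
  then show ?thesis
    using that finite_subset[OF _ K(1)] by blast
qed

lemma finite_range_coloring:
  assumes "finite (range F)"
  obtains r :: nat and col :: "'a \<Rightarrow> nat" where "1 \<le> r" "range col \<subseteq> {1..r}"
    "\<And>x y. col x = col y \<Longrightarrow> F x = F y"
proof -
  obtain h where h: "bij_betw h (range F) {0..<card (range F)}"
    using ex_bij_betw_finite_nat[OF assms] by blast
  define col where "col x = h (F x) + 1" for x
  have "range col \<subseteq> {1..card (range F)}"
    using bij_betw_apply[OF h] unfolding col_def by fastforce
  moreover have "F x = F y" if "col x = col y" for x y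
    using h that unfolding col_def bij_betw_def inj_on_def by (metis add_right_cancel rangeI)
  moreover have "1 \<le> card (range F)"
    using assms by (simp add: Suc_le_eq card_gt_0_iff)
  ultimately show ?thesis
    using that by blast
qed

lemma coloring_small_oscillation:
  fixes \<psi> :: "'i \<Rightarrow> 'a \<Rightarrow> 'b::metric_space"
  assumes "finite I" "compact S" "\<And>i x. \<psi> i x \<in> S" "0 < \<epsilon>"
  obtains r :: nat and col :: "'a \<Rightarrow> nat" where "1 \<le> r" "range col \<subseteq> {1..r}"
    "\<And>x y i. col x = col y \<Longrightarrow> i \<in> I \<Longrightarrow> dist (\<psi> i x) (\<psi> i y) < \<epsilon>"
proof -
  have "\<forall>i. \<exists>c. finite (range c) \<and> (\<forall>x. dist (\<psi> i x) (c x) < \<epsilon> / 2)"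
  proof
    fix i
    obtain c where "finite (range c)" "\<And>x. dist (\<psi> i x) (c x) < \<epsilon> / 2"
      using compact_finite_approximation[of S "\<psi> i" "\<epsilon> / 2"] assms(2-4) by auto
    then show "\<exists>c. finite (range c) \<and> (\<forall>x. dist (\<psi> i x) (c x) < \<epsilon> / 2)" by blast
  qed
  then obtain c where c: "\<And>i. finite (range (c i))" "\<And>i x. dist (\<psi> i x) (c i x) < \<epsilon> / 2"
    by (auto dest!: choice)
  define F where "F x = (\<lambda>i\<in>I. c i x)" for x
  have "range F \<subseteq> (\<Pi>\<^sub>E i\<in>I. range (c i))"
    unfolding F_def by auto
  then have "finite (range F)"
    using finite_PiE[OF assms(1) c(1)] by (rule finite_subset)
  then obtain r :: nat and col where col: "1 \<le> r" "range col \<subseteq> {1..r}" "\<And>x y. col x = col y \<Longrightarrow> F x = F y"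
    using finite_range_coloring by blast
  have "dist (\<psi> i x) (\<psi> i y) < \<epsilon>" if "col x = col y" "i \<in> I" for x y i
  proof -
    have "c i x = c i y"
      using fun_cong[OF col(3)[OF that(1)], of i] that(2) unfolding F_def by simp
    then have "dist (\<psi> i y) (c i x) < \<epsilon> / 2"
      using c(2)[of i y] by simp
    then show ?thesis
      using dist_triangle_half_l[OF c(2)[of i x]] by blast
  qed
  then show ?thesis
    using that col(1,2) by blast
qed

definition character :: "('m::ab_group_add \<Rightarrow> complex) \<Rightarrow> bool" where
  "character \<phi> \<longleftrightarrow> (\<forall>x y. \<phi> (x + y) = \<phi> x * \<phi> y) \<and> (\<forall>x. norm (\<phi> x) = 1)"

lemma character_zero:
  assumes "character \<phi>"
  shows "\<phi> 0 = 1"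
proof -
  have "\<phi> 0 * \<phi> 0 = \<phi> 0 * 1"
    using assms unfolding character_def by (metis add_0 mult_1_right)
  moreover have "\<phi> 0 \<noteq> 0"
    using assms unfolding character_def by (metis norm_zero zero_neq_one)
  ultimately show ?thesis
    by (metis mult_left_cancel)
qed

lemma character_sum:
  assumes "character \<phi>"
  shows "\<phi> (sum f S) = (\<Prod>i\<in>S. \<phi> (f i))"
  using assms by (induction S rule: infinite_finite_induct) (simp_all add: character_zero character_def)

text \<open>A partial character is the graph of a character of the subgroup \<open>Domain G\<close>; working with
  graphs makes the union of a chain of partial characters again a partial character.\<close>

definition partial_character :: "('m::ab_group_add \<times> complex) set \<Rightarrow> bool" where
  "partial_character G \<longleftrightarrow> single_valued G \<and> (0, 1) \<in> G
     \<and> (\<forall>x z y w. (x, z) \<in> G \<longrightarrow> (y, w) \<in> G \<longrightarrow> (x + y, z * w) \<in> G)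
     \<and> (\<forall>x z. (x, z) \<in> G \<longrightarrow> (- x, inverse z) \<in> G \<and> norm z = 1)"

lemma
  assumes "partial_character G"
  shows partial_character_unique: "(x, z) \<in> G \<Longrightarrow> (x, z') \<in> G \<Longrightarrow> z = z'"
    and partial_character_zero: "(0, 1) \<in> G"
    and partial_character_add: "(x, z) \<in> G \<Longrightarrow> (y, w) \<in> G \<Longrightarrow> (x + y, z * w) \<in> G"
    and partial_character_uminus: "(x, z) \<in> G \<Longrightarrow> (- x, inverse z) \<in> G"
    and partial_character_norm: "(x, z) \<in> G \<Longrightarrow> norm z = 1"
  using assms unfolding partial_character_def single_valued_def by blast+

lemma partial_character_diff:
  assumes "partial_character G" "(x, z) \<in> G" "(y, w) \<in> G"
  shows "(x - y, z / w) \<in> G"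
  using partial_character_add[OF assms(1,2) partial_character_uminus[OF assms(1,3)]]
  by (simp add: divide_inverse)

lemma partial_character_Union:
  assumes "C \<noteq> {}" "\<And>G. G \<in> C \<Longrightarrow> partial_character G"
    and chain: "\<And>G H. G \<in> C \<Longrightarrow> H \<in> C \<Longrightarrow> G \<subseteq> H \<or> H \<subseteq> G"
  shows "partial_character (\<Union>C)"
proof -
  have common: "\<exists>G\<in>C. p \<in> G \<and> q \<in> G" if "p \<in> \<Union>C" "q \<in> \<Union>C" for p q
    using that chain by blast
  show ?thesis
    unfolding partial_character_def single_valued_def
  proof (intro conjI allI impI)
    show "(0, 1) \<in> \<Union>C"
      using assms(1,2) partial_character_zero by blast
  next
    fix x z z' assume "(x, z) \<in> \<Union>C" "(x, z') \<in> \<Union>C"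
    then show "z = z'"
      using common assms(2) partial_character_unique by metis
  next
    fix x z y w assume "(x, z) \<in> \<Union>C" "(y, w) \<in> \<Union>C"
    then show "(x + y, z * w) \<in> \<Union>C"
      using common assms(2) partial_character_add by (metis UnionI)
  qed (use assms(2) partial_character_uminus partial_character_norm in blast)+
qed

lemma partial_character_scale_int:
  assumes "module sc" "partial_character G" "(y, z) \<in> G"
  shows "(sc (of_int n) y, z powi n) \<in> G"
proof -
  interpret module sc by fact
  have "z \<noteq> 0"
    using partial_character_norm[OF assms(2,3)] by auto
  show ?thesis
  proof (induction n rule: int_induct[where k = 0])
    case base
    show ?case using partial_character_zero[OF assms(2)] by simp
  next
    case (step1 i)
    from partial_character_add[OF assms(2) step1(2) assms(3)] show ?case
      using \<open>z \<noteq> 0\<close> by (simp add: scale_left_distrib power_int_add)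
  next
    case (step2 i)
    from partial_character_diff[OF assms(2) step2(2) assms(3)] show ?case
      using \<open>z \<noteq> 0\<close> by (simp add: scale_left_diff_distrib power_int_diff)
  qed
qed

lemma partial_character_multiples_in_Domain:
  assumes "module sc" "partial_character G"
  obtains k :: nat where "\<And>j. sc (of_int j) x \<in> Domain G \<longleftrightarrow> int k dvd j"
proof -
  interpret module sc by fact
  let ?I = "{j. sc (of_int j) x \<in> Domain G}"
  have "0 \<in> ?I"
    using partial_character_zero[OF assms(2)] by auto
  moreover have "i - j \<in> ?I" if "i \<in> ?I" "j \<in> ?I" for i j
    using that partial_character_diff[OF assms(2)] by (fastforce simp: scale_left_diff_distrib)
  ultimately obtain k :: nat where "?I = {j. int k dvd j}"
    by (rule int_subgroup_eq_multiples)
  then show ?thesis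
    using that[of k] by blast
qed

text \<open>Divisibility of the circle group: the multiples of \<open>x\<close> in \<open>Domain G\<close> are those of \<open>k x\<close>, and
  any \<open>k\<close>-th root of the value at \<open>k x\<close> is compatible with \<open>G\<close>; for \<open>k \<ge> 2\<close> a root \<open>\<noteq> 1\<close> exists.\<close>

lemma partial_character_compatible_value:
  assumes "module sc" "partial_character G"
  obtains w where "norm w = 1" "\<And>j z. (sc (of_int j) x, z) \<in> G \<Longrightarrow> z = w powi j"
    "x \<notin> Domain G \<Longrightarrow> w \<noteq> 1"
proof -
  interpret module sc by fact
  obtain k :: nat where dom: "\<And>j. sc (of_int j) x \<in> Domain G \<longleftrightarrow> int k dvd j"
    using partial_character_multiples_in_Domain[where x = x, OF assms] by blast
  show ?thesis
  proof (cases "k = 0")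
    case True
    show ?thesis
    proof (rule that[of "-1"])
      fix j z assume "(sc (of_int j) x, z) \<in> G"
      then have "j = 0" "(0, z) \<in> G"
        using dom[of j] True by auto
      then show "z = (-1) powi j"
        using partial_character_unique[OF assms(2) _ partial_character_zero[OF assms(2)]] by simp
    qed simp_all
  next
    case False
    then obtain c where c: "(sc (of_int (int k)) x, c) \<in> G"
      using dom[of "int k"] by auto
    obtain w where w: "w ^ k = c" "norm w = 1" "2 \<le> k \<Longrightarrow> w \<noteq> 1"
      using unit_circle_root[of k c] False partial_character_norm[OF assms(2) c] by blast
    show ?thesis
    proof (rule that[OF w(2)])
      fix j z assume jz: "(sc (of_int j) x, z) \<in> G"
      then obtain q where j: "j = int k * q"
        using dom[of j] by auto
      have "(sc (of_int q) (sc (of_int (int k)) x), c powi q) \<in> G"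
        using partial_character_scale_int[OF assms c] .
      then have "(sc (of_int j) x, c powi q) \<in> G"
        by (simp add: j mult.commute)
      then have "z = c powi q"
        using partial_character_unique[OF assms(2) jz] by blast
      also have "\<dots> = w powi j"
        by (simp add: j power_int_mult w(1)[symmetric] flip: power_int_of_nat)
      finally show "z = w powi j" .
    next
      assume "x \<notin> Domain G"
      then have "k \<noteq> 1"
        using dom[of 1] by auto
      then show "w \<noteq> 1"
        using False w(3) by linarith
    qed
  qed
qed

definition extend_graph ::
  "('r::comm_ring_1 \<Rightarrow> 'm::ab_group_add \<Rightarrow> 'm) \<Rightarrow> ('m \<times> complex) set \<Rightarrow> 'm \<Rightarrow> complex \<Rightarrow> ('m \<times> complex) set"
  where "extend_graph sc G x w = {(h + sc (of_int n) x, z * w powi n) | h z n. (h, z) \<in> G}"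

lemma subset_extend_graph:
  assumes "module sc"
  shows "G \<subseteq> extend_graph sc G x w"
proof
  fix p assume "p \<in> G"
  moreover have "p = (fst p + sc (of_int 0) x, snd p * w powi 0)"
    using module.scale_zero_left[OF assms] by simp
  ultimately show "p \<in> extend_graph sc G x w"
    unfolding extend_graph_def by (metis (mono_tags, lifting) mem_Collect_eq prod.collapse)
qed

lemma in_extend_graph:
  assumes "module sc" "partial_character G"
  shows "(x, w) \<in> extend_graph sc G x w"
proof -
  have "(x, w) = (0 + sc (of_int 1) x, 1 * w powi 1)"
    using module.scale_one[OF assms(1)] by simp
  then show ?thesis
    using partial_character_zero[OF assms(2)] unfolding extend_graph_def by blast
qed

lemma single_valued_extend_graph:
  assumes "module sc" "partial_character G" "w \<noteq> 0"
    and compatible: "\<And>j z. (sc (of_int j) x, z) \<in> G \<Longrightarrow> z = w powi j"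
  shows "single_valued (extend_graph sc G x w)"
proof (rule single_valuedI)
  interpret module sc by fact
  fix y u v assume "(y, u) \<in> extend_graph sc G x w" "(y, v) \<in> extend_graph sc G x w"
  then obtain h z n h' z' n' where
    u: "y = h + sc (of_int n) x" "u = z * w powi n" "(h, z) \<in> G" and
    v: "y = h' + sc (of_int n') x" "v = z' * w powi n'" "(h', z') \<in> G"
    unfolding extend_graph_def by blast
  have "h' - h = sc (of_int (n - n')) x"
    using u(1) v(1) by (simp add: algebra_simps)
  then have "z' / z = w powi (n - n')"
    using compatible partial_character_diff[OF assms(2) v(3) u(3)] by metis
  moreover have "z \<noteq> 0"
    using partial_character_norm[OF assms(2) u(3)] by auto
  ultimately show "u = v"
    using u(2) v(2) assms(3) by (simp add: power_int_diff field_simps)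
qed

lemma partial_character_extend_graph:
  assumes "module sc" "partial_character G" "norm w = 1"
    and compatible: "\<And>j z. (sc (of_int j) x, z) \<in> G \<Longrightarrow> z = w powi j"
  shows "partial_character (extend_graph sc G x w)"
proof -
  interpret module sc by fact
  have "w \<noteq> 0"
    using assms(3) by auto
  have add: "(y + y', u * u') \<in> extend_graph sc G x w"
    if yu: "(y, u) \<in> extend_graph sc G x w" "(y', u') \<in> extend_graph sc G x w" for y u y' u'
  proof -
    obtain h z n h' z' n' where
      "y = h + sc (of_int n) x" "u = z * w powi n" "(h, z) \<in> G" and
      "y' = h' + sc (of_int n') x" "u' = z' * w powi n'" "(h', z') \<in> G"
      using yu unfolding extend_graph_def by blast
    moreover from this have "(h + h', z * z') \<in> G"
      using partial_character_add[OF assms(2)] by blast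
    ultimately show ?thesis
      unfolding extend_graph_def using \<open>w \<noteq> 0\<close>
      by (auto intro!: exI[of _ "h + h'"] exI[of _ "z * z'"] exI[of _ "n + n'"]
               simp: scale_left_distrib power_int_add algebra_simps)
  qed
  have uminus: "(- y, inverse u) \<in> extend_graph sc G x w \<and> norm u = 1"
    if yu: "(y, u) \<in> extend_graph sc G x w" for y u
  proof -
    obtain h z n where "y = h + sc (of_int n) x" "u = z * w powi n" "(h, z) \<in> G"
      using yu unfolding extend_graph_def by blast
    moreover from this have "(- h, inverse z) \<in> G" "norm z = 1"
      using partial_character_uminus[OF assms(2)] partial_character_norm[OF assms(2)] by blast+
    ultimately show ?thesis
      unfolding extend_graph_def using \<open>w \<noteq> 0\<close> assms(3)
      by (auto intro!: exI[of _ "- h"] exI[of _ "inverse z"] exI[of _ "- n"]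
               simp: power_int_minus norm_mult norm_power_int)
  qed
  show ?thesis
    unfolding partial_character_def
    using single_valued_extend_graph[OF assms(1,2) \<open>w \<noteq> 0\<close> compatible] add uminus
      subset_extend_graph[OF assms(1)] partial_character_zero[OF assms(2)] by blast
qed

lemma maximal_partial_character_total:
  fixes sc :: "'r::comm_ring_1 \<Rightarrow> 'm::ab_group_add \<Rightarrow> 'm" and H :: "('m \<times> complex) set"
  assumes "module sc" "partial_character H"
    and maximal: "\<And>H'. partial_character H' \<Longrightarrow> H \<subseteq> H' \<Longrightarrow> H' = H"
  shows "Domain H = UNIV"
proof (rule ccontr)
  assume "Domain H \<noteq> UNIV"
  then obtain x where "x \<notin> Domain H"
    by blast
  obtain w :: complex where w: "norm w = 1" "\<And>j z. (sc (of_int j) x, z) \<in> H \<Longrightarrow> z = w powi j"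
    using partial_character_compatible_value[where x = x, OF assms(1,2)] by blast
  have "extend_graph sc H x w = H"
    using maximal[OF partial_character_extend_graph[OF assms(1,2) w] subset_extend_graph[OF assms(1)]] .
  then show False
    using in_extend_graph[OF assms(1,2)] \<open>x \<notin> Domain H\<close> by blast
qed

lemma total_partial_character_imp_character:
  assumes "partial_character H" "Domain H = UNIV"
  obtains \<phi> where "character \<phi>" "\<And>x z. (x, z) \<in> H \<Longrightarrow> \<phi> x = z"
proof -
  define \<phi> where "\<phi> x = (THE z. (x, z) \<in> H)" for x
  have graph: "\<phi> x = z" if "(x, z) \<in> H" for x z
    unfolding \<phi>_def using that partial_character_unique[OF assms(1)] by (blast intro: the_equality)
  have in_graph: "(x, \<phi> x) \<in> H" for x
  proof -
    obtain z where "(x, z) \<in> H"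
      using assms(2) by (metis Domain.cases UNIV_I)
    then show ?thesis
      using graph by simp
  qed
  have "character \<phi>"
    unfolding character_def
    using graph partial_character_add[OF assms(1) in_graph in_graph] partial_character_norm[OF assms(1) in_graph]
    by blast
  then show ?thesis
    using that graph by blast
qed

lemma partial_character_extends_to_character:
  fixes sc :: "'r::comm_ring_1 \<Rightarrow> 'm::ab_group_add \<Rightarrow> 'm" and G :: "('m \<times> complex) set"
  assumes "module sc" "partial_character G"
  obtains \<phi> where "character \<phi>" "\<And>x z. (x, z) \<in> G \<Longrightarrow> \<phi> x = z"
proof -
  define A where "A = {H. partial_character H \<and> G \<subseteq> H}"
  have "\<exists>H\<in>A. \<forall>H'\<in>A. H \<subseteq> H' \<longrightarrow> H' = H"
  proof (rule subset_Zorn_nonempty)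
    show "A \<noteq> {}"
      using assms(2) unfolding A_def by blast
    show "\<Union>C \<in> A" if "C \<noteq> {}" "subset.chain A C" for C
      using that partial_character_Union[of C] unfolding A_def subset.chain_def by blast
  qed
  then obtain H where "H \<in> A" and maximal_in_A: "\<forall>H'\<in>A. H \<subseteq> H' \<longrightarrow> H' = H"
    by blast
  then have H: "partial_character H" "G \<subseteq> H"
    unfolding A_def by simp_all
  have maximal: "H' = H" if "partial_character H'" "H \<subseteq> H'" for H'
    using maximal_in_A that H(2) unfolding A_def by blast
  show ?thesis
  proof (rule total_partial_character_imp_character[OF H(1) maximal_partial_character_total[OF assms(1) H(1) maximal]])
    fix \<phi> assume \<phi>: "character \<phi>" "\<And>x z. (x, z) \<in> H \<Longrightarrow> \<phi> x = z"
    show ?thesis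
    proof (rule that[OF \<phi>(1)])
      show "\<phi> x = z" if "(x, z) \<in> G" for x z
        using \<phi>(2) H(2) that by blast
    qed
  qed
qed

lemma subspace_range_scale:
  assumes "module sc"
  shows "module.subspace sc (range (sc r))"
proof -
  interpret module sc by fact
  show ?thesis
  proof (rule subspaceI)
    show "0 \<in> range (sc r)"
      by (metis rangeI scale_zero_right)
    show "x + y \<in> range (sc r)" if "x \<in> range (sc r)" "y \<in> range (sc r)" for x y
      using that by (auto simp flip: scale_right_distrib)
    show "sc c x \<in> range (sc r)" if x: "x \<in> range (sc r)" for c x
    proof -
      obtain m where "x = sc r m"
        using x by blast
      then have "sc c x = sc r (sc c m)"
        by (simp add: mult.commute)
      then show ?thesis
        by (metis rangeI)
    qed
  qed
qed

lemma exists_character_separating: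
  assumes "module sc" "module.subspace sc N" "b \<notin> N"
  obtains \<phi> where "character \<phi>" "\<And>n. n \<in> N \<Longrightarrow> \<phi> n = 1" "\<phi> b \<noteq> 1"
proof -
  interpret module sc by fact
  have G: "partial_character (N \<times> {1})"
    unfolding partial_character_def single_valued_def
    using subspace_0[OF assms(2)] subspace_add[OF assms(2)] subspace_neg[OF assms(2)] by auto
  obtain w :: complex where w: "norm w = 1" "\<And>j z. (sc (of_int j) b, z) \<in> N \<times> {1} \<Longrightarrow> z = w powi j"
    and "b \<notin> Domain (N \<times> {1}) \<Longrightarrow> w \<noteq> 1"
    by (rule partial_character_compatible_value[OF assms(1) G, of b]) blast
  then have "w \<noteq> 1"
    using assms(3) by blast
  let ?E = "extend_graph sc (N \<times> {1}) b w"
  show ?thesis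
  proof (rule partial_character_extends_to_character[OF assms(1)])
    show "partial_character ?E"
      by (rule partial_character_extend_graph[where x = b, OF assms(1) G w])
    fix \<phi> assume \<phi>: "character \<phi>" "\<And>x z. (x, z) \<in> ?E \<Longrightarrow> \<phi> x = z"
    show ?thesis
    proof (rule that[OF \<phi>(1)])
      show "\<phi> n = 1" if "n \<in> N" for n
        using \<phi>(2)[of n 1] subset_extend_graph[OF assms(1), of "N \<times> {1}" b w] that by blast
      show "\<phi> b \<noteq> 1"
        using \<phi>(2)[OF in_extend_graph[OF assms(1) G]] \<open>w \<noteq> 1\<close> by simp
    qed
  qed
qed

lemma not_partition_regular_if_separating_character:
  fixes sc :: "'r::comm_ring_1 \<Rightarrow> 'm::ab_group_add \<Rightarrow> 'm"
  assumes "module sc" "character \<phi>" "\<And>m. \<phi> (sc (\<Sum>i=1..l. a i) m) = 1" "\<phi> b \<noteq> 1"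
  shows "\<not> partition_regular sc l a b"
proof
  interpret module sc by fact
  assume pr: "partition_regular sc l a b"
  define \<delta> where "\<delta> = norm (\<phi> b - 1)"
  define \<psi> where "\<psi> i m = \<phi> (sc (a i) m)" for i m
  have "0 < \<delta>"
    using assms(4) unfolding \<delta>_def by simp
  have unit: "\<psi> i m \<in> sphere 0 1" for i m
    using assms(2) unfolding \<psi>_def character_def by simp
  obtain r and col :: "'m \<Rightarrow> nat" where "1 \<le> r" "range col \<subseteq> {1..r}"
    and close: "\<And>x y i. col x = col y \<Longrightarrow> i \<in> {1..l} \<Longrightarrow> dist (\<psi> i x) (\<psi> i y) < \<delta> / (l + 1)"
    by (rule coloring_small_oscillation[of "{1..l}" "sphere 0 1" \<psi> "\<delta> / (l + 1)"])
      (use unit \<open>0 < \<delta>\<close> in auto)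
  then have "\<exists>m. (\<exists>i\<in>{1..l}. m i \<noteq> 0) \<and> (\<Sum>i=1..l. sc (a i) (m i)) = b
      \<and> (\<forall>i\<in>{1..l}. \<forall>j\<in>{1..l}. col (m i) = col (m j))"
    using pr unfolding partition_regular_def by blast
  then obtain m i0 where "i0 \<in> {1..l}" and solution: "(\<Sum>i=1..l. sc (a i) (m i)) = b"
    and mono: "\<And>i j. i \<in> {1..l} \<Longrightarrow> j \<in> {1..l} \<Longrightarrow> col (m i) = col (m j)"
    by blast
  have prod_solution: "\<phi> b = (\<Prod>i=1..l. \<psi> i (m i))"
    unfolding solution[symmetric] \<psi>_def by (rule character_sum[OF assms(2)])
  have "(\<Prod>i=1..l. \<psi> i (m i0)) = \<phi> (\<Sum>i=1..l. sc (a i) (m i0))"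
    unfolding \<psi>_def by (rule character_sum[OF assms(2), symmetric])
  also have "\<dots> = 1"
    using assms(3)[of "m i0"] by (simp add: scale_sum_left)
  finally have prod_constant: "(\<Prod>i=1..l. \<psi> i (m i0)) = 1" .
  have "norm (\<psi> i (m i) - \<psi> i (m i0)) \<le> \<delta> / (l + 1)" if "i \<in> {1..l}" for i
    using close[OF mono[OF that \<open>i0 \<in> {1..l}\<close>] that] by (simp add: dist_norm)
  then have "(\<Sum>i=1..l. norm (\<psi> i (m i) - \<psi> i (m i0))) \<le> l * (\<delta> / (l + 1))"
    using sum_mono[of "{1..l}" "\<lambda>i. norm (\<psi> i (m i) - \<psi> i (m i0))" "\<lambda>_. \<delta> / (l + 1)"] by simp
  also have "\<dots> < \<delta>"
    using \<open>0 < \<delta>\<close> by (simp add: field_simps)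
  finally have "(\<Sum>i=1..l. norm (\<psi> i (m i) - \<psi> i (m i0))) < \<delta>" .
  moreover have "\<delta> \<le> (\<Sum>i=1..l. norm (\<psi> i (m i) - \<psi> i (m i0)))"
    unfolding \<delta>_def prod_solution prod_constant[symmetric] using unit by (intro norm_prod_diff) simp_all
  ultimately show False by simp
qed

lemma partition_regular_if_constant_solution:
  assumes "module sc" "b \<noteq> 0" "(\<Sum>i=1..l. sc (a i) m) = b"
  shows "partition_regular sc l a b"
proof -
  have "m \<noteq> 0"
    using assms module.scale_zero_right[OF assms(1)] by force
  moreover have "1 \<in> {1..l}"
    using assms(2,3) by (cases l) auto
  ultimately show ?thesis
    unfolding partition_regular_def using assms(3) by (intro allI impI exI[of _ "\<lambda>_. m"]) auto
qed

theorem theorem5p2: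
  fixes sc :: "'r::comm_ring_1 \<Rightarrow> 'm::ab_group_add \<Rightarrow> 'm"
    and l :: nat and a :: "nat \<Rightarrow> 'r" and b :: 'm
  assumes "module sc"
    and "b \<noteq> 0"
  shows "(partition_regular sc l a b \<longleftrightarrow> (\<exists>m. (\<Sum>i=1..l. sc (a i) m) = b))
       \<and> ((\<exists>m. (\<Sum>i=1..l. sc (a i) m) = b) \<longleftrightarrow> b \<in> range (sc (\<Sum>i=1..l. a i)))"
proof -
  interpret module sc by fact
  have constant_iff: "(\<exists>m. (\<Sum>i=1..l. sc (a i) m) = b) \<longleftrightarrow> b \<in> range (sc (\<Sum>i=1..l. a i))"
    unfolding scale_sum_left[symmetric] by blast
  have "b \<in> range (sc (\<Sum>i=1..l. a i))" if pr: "partition_regular sc l a b"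
  proof (rule ccontr)
    assume "b \<notin> range (sc (\<Sum>i=1..l. a i))"
    then obtain \<phi> where \<phi>: "character \<phi>" "\<And>n. n \<in> range (sc (\<Sum>i=1..l. a i)) \<Longrightarrow> \<phi> n = 1" "\<phi> b \<noteq> 1"
      using exists_character_separating[OF assms(1) subspace_range_scale[OF assms(1)]] by blast
    then show False
      using not_partition_regular_if_separating_character[OF assms(1) \<phi>(1) _ \<phi>(3)] pr by blast
  qed
  then show ?thesis
    using constant_iff partition_regular_if_constant_solution[OF assms] by blast
qed

end
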